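(* Let $\mathcal{M}$ be a saturated model of Presburger arithmetic, $\mathcal{M}_0\preceq\mathcal{M}$ small, $p(x)\in S_n(\mathcal{M}_0)$ a complete type of dimension $n$ with set of realizations $\mathcal{P}\subseteq\mathcal{M}^n$, and $\alpha:\mathcal{P}\to\mathcal{M}$ a relatively $\mathcal{M}_0$-definable function. Let $a\in\mathcal{P}$ and suppose $q=\mathrm{tp}(\alpha(a)/\mathcal{M}_0)$ is non-algebraic. Let $\mathcal{Q}'$ be the set of elements of $\mathcal{M}$ lying in the same $\mathcal{M}_0$-cut as $\alpha(a)$. Then there are $a^1,a^2\in\mathcal{P}$ such that $\alpha(a^1)<\mathrm{dcl}(a\mathcal{M}_0)\cap\mathcal{Q}'<\alpha(a^2)$.
   Context: Presburger arithmetic is $\mathrm{Th}(\mathbb{Z},+,-,<,0,1,\{\equiv_n\}_n)$. A type over $\mathcal{M}_0$ has dimension $n$ if its realizations $c$ have $\dim(c/\mathcal{M}_0)=n$, where the dimension of a tuple is the size of a maximal dcl-independent subset of its coordinates over $\mathcal{M}_0$. A relatively $\mathcal{M}_0$-definable function on $\mathcal{P}$ is the restriction to $\mathcal{P}$ of an $\mathcal{M}_0$-definable function. Two elements lie in the same $\mathcal{M}_0$-cut if they have the same type over $\mathcal{M}_0$ in the language $\{<\}$. For $X\subseteq\mathcal{M}$, $u<X<v$ means $u<x<v$ for all $x\in X$. *)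

theory Defs
  imports Main
begin

text \<open>Terms and formulas in the language (+,-,<,0,1,{cong_n}_n), with named variables
  (indexed by nat) and parameters (elements of the ambient model, constructor Par).\<close>

datatype 'a trm = Var nat | Par 'a | Zero | One
  | Plus "'a trm" "'a trm" | Minus "'a trm" "'a trm"

datatype 'a fm = Eq "'a trm" "'a trm" | Less "'a trm" "'a trm" | Cong nat "'a trm" "'a trm"
  | Neg "'a fm" | Conj "'a fm" "'a fm" | Ex nat "'a fm"

record 'a pres_struct =
  zero :: 'a
  one :: 'a
  plus :: "'a \<Rightarrow> 'a \<Rightarrow> 'a"
  minus :: "'a \<Rightarrow> 'a \<Rightarrow> 'a"
  less :: "'a \<Rightarrow> 'a \<Rightarrow> bool"
  cong :: "nat \<Rightarrow> 'a \<Rightarrow> 'a \<Rightarrow> bool"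

fun fv_trm :: "'a trm \<Rightarrow> nat set" where
  "fv_trm (Var v) = {v}"
| "fv_trm (Par c) = {}"
| "fv_trm Zero = {}"
| "fv_trm One = {}"
| "fv_trm (Plus t u) = fv_trm t \<union> fv_trm u"
| "fv_trm (Minus t u) = fv_trm t \<union> fv_trm u"

fun fv :: "'a fm \<Rightarrow> nat set" where
  "fv (Eq t u) = fv_trm t \<union> fv_trm u"
| "fv (Less t u) = fv_trm t \<union> fv_trm u"
| "fv (Cong k t u) = fv_trm t \<union> fv_trm u"
| "fv (Neg f) = fv f"
| "fv (Conj f g) = fv f \<union> fv g"
| "fv (Ex v f) = fv f - {v}"

fun eval :: "'a pres_struct \<Rightarrow> (nat \<Rightarrow> 'a) \<Rightarrow> 'a trm \<Rightarrow> 'a" where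
  "eval S e (Var v) = e v"
| "eval S e (Par c) = c"
| "eval S e Zero = zero S"
| "eval S e One = one S"
| "eval S e (Plus t u) = plus S (eval S e t) (eval S e u)"
| "eval S e (Minus t u) = minus S (eval S e t) (eval S e u)"

text \<open>Satisfaction; quantifiers range over the domain D (D = UNIV: the model itself;
  D a subset: the induced substructure).\<close>
fun sat :: "'a pres_struct \<Rightarrow> 'a set \<Rightarrow> (nat \<Rightarrow> 'a) \<Rightarrow> 'a fm \<Rightarrow> bool" where
  "sat S D e (Eq t u) = (eval S e t = eval S e u)"
| "sat S D e (Less t u) = less S (eval S e t) (eval S e u)"
| "sat S D e (Cong k t u) = cong S k (eval S e t) (eval S e u)"
| "sat S D e (Neg f) = (\<not> sat S D e f)"
| "sat S D e (Conj f g) = (sat S D e f \<and> sat S D e g)"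
| "sat S D e (Ex v f) = (\<exists>x\<in>D. sat S D (e(v := x)) f)"

definition Zstruct :: "int pres_struct" where
  "Zstruct = \<lparr>zero = 0, one = 1, plus = (+), minus = (-), less = (<),
     cong = (\<lambda>k x y. x mod int k = y mod int k)\<rparr>"

text \<open>M (with carrier the whole type) is a model of Presburger arithmetic Th(Z).\<close>
definition presburger_model :: "'a pres_struct \<Rightarrow> bool" where
  "presburger_model M \<longleftrightarrow>
     (\<forall>\<phi>::'a fm. set_fm \<phi> = {} \<longrightarrow> fv \<phi> = {} \<longrightarrow>
        (sat M UNIV (\<lambda>_. zero M) \<phi> \<longleftrightarrow> sat Zstruct UNIV (\<lambda>_. 0) (map_fm (\<lambda>_. 0) \<phi>)))"

definition tenv :: "'a list \<Rightarrow> nat \<Rightarrow> 'a" where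
  "tenv b = (\<lambda>i. b ! i)"

definition fmls :: "'a set \<Rightarrow> nat \<Rightarrow> 'a fm set" where
  "fmls A n = {\<phi>. set_fm \<phi> \<subseteq> A \<and> fv \<phi> \<subseteq> {..<n}}"

definition elem_sub :: "'a pres_struct \<Rightarrow> 'a set \<Rightarrow> bool" where
  "elem_sub M M0 \<longleftrightarrow> M0 \<noteq> {} \<and>
     (\<forall>\<phi> e. set_fm \<phi> \<subseteq> M0 \<longrightarrow> (\<forall>v\<in>fv \<phi>. e v \<in> M0) \<longrightarrow>
        (sat M M0 e \<phi> \<longleftrightarrow> sat M UNIV e \<phi>))"

definition small :: "'a set \<Rightarrow> bool" where
  "small A \<longleftrightarrow> (card_of A, card_of (UNIV :: 'a set)) \<in> ordLess"

text \<open>Saturated: |M|-saturated, i.e. every finitely satisfiable set of formulas in one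
  variable with parameters from a small set is realized.\<close>
definition saturated :: "'a pres_struct \<Rightarrow> bool" where
  "saturated M \<longleftrightarrow>
     (\<forall>A \<Phi>. small A \<longrightarrow> \<Phi> \<subseteq> fmls A 1 \<longrightarrow>
        (\<forall>F. F \<subseteq> \<Phi> \<longrightarrow> finite F \<longrightarrow> (\<exists>x. \<forall>\<phi>\<in>F. sat M UNIV (tenv [x]) \<phi>)) \<longrightarrow>
        (\<exists>x. \<forall>\<phi>\<in>\<Phi>. sat M UNIV (tenv [x]) \<phi>))"

definition complete_type :: "'a pres_struct \<Rightarrow> 'a set \<Rightarrow> nat \<Rightarrow> 'a fm set \<Rightarrow> bool" where
  "complete_type M A n p \<longleftrightarrow> p \<subseteq> fmls A n \<and>
     (\<forall>F. F \<subseteq> p \<longrightarrow> finite F \<longrightarrow> (\<exists>b. length b = n \<and> (\<forall>\<phi>\<in>F. sat M UNIV (tenv b) \<phi>))) \<and>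
     (\<forall>\<phi>\<in>fmls A n. \<phi> \<in> p \<or> Neg \<phi> \<in> p)"

definition realizations :: "'a pres_struct \<Rightarrow> nat \<Rightarrow> 'a fm set \<Rightarrow> 'a list set" where
  "realizations M n p = {b. length b = n \<and> (\<forall>\<phi>\<in>p. sat M UNIV (tenv b) \<phi>)}"

definition tp :: "'a pres_struct \<Rightarrow> 'a set \<Rightarrow> 'a list \<Rightarrow> 'a fm set" where
  "tp M A b = {\<phi> \<in> fmls A (length b). sat M UNIV (tenv b) \<phi>}"

definition dcl :: "'a pres_struct \<Rightarrow> 'a set \<Rightarrow> 'a set" where
  "dcl M A = {y. \<exists>\<phi>\<in>fmls A 1. {x. sat M UNIV (tenv [x]) \<phi>} = {y}}"

definition dcl_indep :: "'a pres_struct \<Rightarrow> 'a set \<Rightarrow> 'a set \<Rightarrow> bool" where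
  "dcl_indep M A S \<longleftrightarrow> (\<forall>s\<in>S. s \<notin> dcl M (A \<union> (S - {s})))"

definition has_dim :: "'a pres_struct \<Rightarrow> 'a set \<Rightarrow> 'a list \<Rightarrow> nat \<Rightarrow> bool" where
  "has_dim M A c d \<longleftrightarrow>
     (\<exists>S. S \<subseteq> set c \<and> dcl_indep M A S \<and>
          (\<forall>T. S \<subset> T \<longrightarrow> T \<subseteq> set c \<longrightarrow> \<not> dcl_indep M A T) \<and> card S = d)"

definition type_has_dim :: "'a pres_struct \<Rightarrow> 'a set \<Rightarrow> nat \<Rightarrow> 'a fm set \<Rightarrow> nat \<Rightarrow> bool" where
  "type_has_dim M A n p d \<longleftrightarrow> (\<forall>c\<in>realizations M n p. has_dim M A c d)"

text \<open>alpha restricted to P (a set of n-tuples) is the restriction of an A-definable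
  function M^n -> M (graph given by a formula in variables x_0..x_n).\<close>
definition rel_definable ::
  "'a pres_struct \<Rightarrow> 'a set \<Rightarrow> nat \<Rightarrow> 'a list set \<Rightarrow> ('a list \<Rightarrow> 'a) \<Rightarrow> bool" where
  "rel_definable M A n P \<alpha> \<longleftrightarrow>
     (\<exists>\<phi>\<in>fmls A (Suc n).
        (\<forall>b. length b = n \<longrightarrow> (\<exists>!y. sat M UNIV (tenv (b @ [y])) \<phi>)) \<and>
        (\<forall>b\<in>P. sat M UNIV (tenv (b @ [\<alpha> b])) \<phi>))"

definition non_algebraic :: "'a pres_struct \<Rightarrow> nat \<Rightarrow> 'a fm set \<Rightarrow> bool" where
  "non_algebraic M n q \<longleftrightarrow>
     (\<forall>\<phi>\<in>q. infinite {b. length b = n \<and> sat M UNIV (tenv b) \<phi>})"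

text \<open>Formulas of the language {<} (with equality): atoms only between variables and
  parameters, no function symbols or congruences.\<close>
fun simple_trm :: "'a trm \<Rightarrow> bool" where
  "simple_trm (Var v) = True"
| "simple_trm (Par c) = True"
| "simple_trm _ = False"

fun order_fm :: "'a fm \<Rightarrow> bool" where
  "order_fm (Eq t u) = (simple_trm t \<and> simple_trm u)"
| "order_fm (Less t u) = (simple_trm t \<and> simple_trm u)"
| "order_fm (Cong k t u) = False"
| "order_fm (Neg f) = order_fm f"
| "order_fm (Conj f g) = (order_fm f \<and> order_fm g)"
| "order_fm (Ex v f) = order_fm f"

text \<open>x and y lie in the same A-cut: same type over A in the language {<}.\<close>
definition same_cut :: "'a pres_struct \<Rightarrow> 'a set \<Rightarrow> 'a \<Rightarrow> 'a \<Rightarrow> bool" where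
  "same_cut M A x y \<longleftrightarrow>
     (\<forall>\<phi>\<in>fmls A 1. order_fm \<phi> \<longrightarrow>
        (sat M UNIV (tenv [x]) \<phi> \<longleftrightarrow> sat M UNIV (tenv [y]) \<phi>))"

end

theory Submission
  imports Defs "HOL-Combinatorics.Transposition"
begin

text \<open>Let \<open>t = \<alpha>(a)\<close> and \<open>\<phi>\<close> an \<open>\<M>\<^sub>0\<close>-formula defining the graph of \<open>\<alpha>\<close>. By saturation
  it suffices to realise, together with \<open>p\<close>, the formulas \<open>\<exists>z. \<phi>(x, z) \<and> z < y\<close> for \<open>y\<close> in
  \<open>dcl(a\<M>\<^sub>0) \<inter> \<Q>'\<close> (these are formulas over \<open>a\<M>\<^sub>0\<close>, as \<open>y\<close> is definable). For finitely many
  such \<open>y\<close> and a finite part of \<open>p\<close>, the set \<open>D\<close> of values \<open>\<alpha>(b)\<close> for \<open>b\<close> satisfying that part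
  is \<open>\<M>\<^sub>0\<close>-definable and contains \<open>t\<close>. In Presburger arithmetic a definable set that is bounded
  below has a least element; if \<open>D\<close> is unbounded below we are done, otherwise its least element
  lies in \<open>\<M>\<^sub>0\<close> (as \<open>\<M>\<^sub>0 \<preceq> \<M>\<close>), is below \<open>t\<close> since \<open>t \<notin> \<M>\<^sub>0\<close> by non-algebraicity, and hence
  below the whole \<open>\<M>\<^sub>0\<close>-cut of \<open>t\<close>. The other end is symmetric.\<close>

section \<open>Syntax of Presburger formulas\<close>

definition Or :: "'a fm \<Rightarrow> 'a fm \<Rightarrow> 'a fm" where
  "Or f g = Neg (Conj (Neg f) (Neg g))"

definition Forall :: "nat \<Rightarrow> 'a fm \<Rightarrow> 'a fm" where
  "Forall v f = Neg (Ex v (Neg f))"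

definition Imp :: "'a fm \<Rightarrow> 'a fm \<Rightarrow> 'a fm" where
  "Imp f g = Neg (Conj f (Neg g))"

text \<open>The flag \<open>d\<close> lets each argument about one end of a cut be made once for both ends:
  \<open>less_dir S False\<close> is the reversed order.\<close>

definition Less_dir :: "bool \<Rightarrow> 'a trm \<Rightarrow> 'a trm \<Rightarrow> 'a fm" where
  "Less_dir d t u = (if d then Less t u else Less u t)"

definition less_dir :: "'a pres_struct \<Rightarrow> bool \<Rightarrow> 'a \<Rightarrow> 'a \<Rightarrow> bool" where
  "less_dir S d x y = (if d then less S x y else less S y x)"

lemma sat_derived [simp]:
  "sat S D e (Or f g) = (sat S D e f \<or> sat S D e g)"
  "sat S D e (Forall v f) = (\<forall>x\<in>D. sat S D (e(v := x)) f)"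
  "sat S D e (Imp f g) = (sat S D e f \<longrightarrow> sat S D e g)"
  "sat S D e (Less_dir d t u) = less_dir S d (eval S e t) (eval S e u)"
  by (simp_all add: Or_def Forall_def Imp_def Less_dir_def less_dir_def)

lemma fv_derived [simp]:
  "fv (Or f g) = fv f \<union> fv g"
  "fv (Forall v f) = fv f - {v}"
  "fv (Imp f g) = fv f \<union> fv g"
  "fv (Less_dir d t u) = fv_trm t \<union> fv_trm u"
  by (auto simp: Or_def Forall_def Imp_def Less_dir_def)

lemma set_fm_derived [simp]:
  "set_fm (Or f g) = set_fm f \<union> set_fm g"
  "set_fm (Forall v f) = set_fm f"
  "set_fm (Imp f g) = set_fm f \<union> set_fm g"
  "set_fm (Less_dir d t u) = set_trm t \<union> set_trm u"
  by (auto simp: Or_def Forall_def Imp_def Less_dir_def)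

lemma map_fm_derived [simp]:
  "map_fm h (Or f g) = Or (map_fm h f) (map_fm h g)"
  "map_fm h (Forall v f) = Forall v (map_fm h f)"
  "map_fm h (Imp f g) = Imp (map_fm h f) (map_fm h g)"
  "map_fm h (Less_dir d t u) = Less_dir d (map_trm h t) (map_trm h u)"
  by (simp_all add: Or_def Forall_def Imp_def Less_dir_def)

lemma order_fm_Less_dir [simp]: "order_fm (Less_dir d t u) = (simple_trm t \<and> simple_trm u)"
  by (auto simp: Less_dir_def)

lemma finite_fv_trm: "finite (fv_trm t)"
  by (induction t) auto

lemma finite_fv: "finite (fv f)"
  by (induction f) (auto simp: finite_fv_trm)

lemma fv_trm_map_trm [simp]: "fv_trm (map_trm h t) = fv_trm t"
  by (induction t) auto

lemma fv_map_fm [simp]: "fv (map_fm h f) = fv f"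
  by (induction f) auto

lemma eval_env_cong: "\<forall>v\<in>fv_trm t. e v = e' v \<Longrightarrow> eval S e t = eval S e' t"
  by (induction t) auto

lemma sat_env_cong: "\<forall>v\<in>fv f. e v = e' v \<Longrightarrow> sat S D e f = sat S D e' f"
proof (induction f arbitrary: e e')
  case (Eq t u)
  then show ?case using eval_env_cong[of t e e' S] eval_env_cong[of u e e' S] by auto
next
  case (Less t u)
  then show ?case using eval_env_cong[of t e e' S] eval_env_cong[of u e e' S] by auto
next
  case (Cong k t u)
  then show ?case using eval_env_cong[of t e e' S] eval_env_cong[of u e e' S] by auto
next
  case (Neg f)
  then show ?case by simp
next
  case (Conj f g)
  have "sat S D e f = sat S D e' f" using Conj.IH(1) Conj.prems by simp
  moreover have "sat S D e g = sat S D e' g" using Conj.IH(2) Conj.prems by simp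
  ultimately show ?case by simp
next
  case (Ex v f)
  have "sat S D (e(v := x)) f = sat S D (e'(v := x)) f" for x
    by (rule Ex.IH) (use Ex.prems in auto)
  then show ?case by (simp only: sat.simps)
qed

lemma tenv_nth: "tenv b i = b ! i"
  by (simp add: tenv_def)

lemma sat_tenv_append:
  "fv f \<subseteq> {..<length b} \<Longrightarrow> sat S D (tenv (b @ c)) f = sat S D (tenv b) f"
  by (rule sat_env_cong) (auto simp: tenv_nth nth_append)

lemma sat_tenv_single: "fv f \<subseteq> {0} \<Longrightarrow> sat S D e f = sat S D (tenv [e 0]) f"
  by (rule sat_env_cong) (auto simp: tenv_nth)

fun rename_trm :: "(nat \<Rightarrow> nat) \<Rightarrow> 'a trm \<Rightarrow> 'a trm" where
  "rename_trm s (Var v) = Var (s v)"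
| "rename_trm s (Par c) = Par c"
| "rename_trm s Zero = Zero"
| "rename_trm s One = One"
| "rename_trm s (Plus t u) = Plus (rename_trm s t) (rename_trm s u)"
| "rename_trm s (Minus t u) = Minus (rename_trm s t) (rename_trm s u)"

fun rename_fm :: "(nat \<Rightarrow> nat) \<Rightarrow> 'a fm \<Rightarrow> 'a fm" where
  "rename_fm s (Eq t u) = Eq (rename_trm s t) (rename_trm s u)"
| "rename_fm s (Less t u) = Less (rename_trm s t) (rename_trm s u)"
| "rename_fm s (Cong k t u) = Cong k (rename_trm s t) (rename_trm s u)"
| "rename_fm s (Neg f) = Neg (rename_fm s f)"
| "rename_fm s (Conj f g) = Conj (rename_fm s f) (rename_fm s g)"
| "rename_fm s (Ex v f) = Ex (s v) (rename_fm s f)"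

lemma eval_rename_trm: "eval S e (rename_trm s t) = eval S (e \<circ> s) t"
  by (induction t) auto

lemma sat_rename_fm: "inj s \<Longrightarrow> sat S D e (rename_fm s f) = sat S D (e \<circ> s) f"
proof (induction f arbitrary: e)
  case (Ex v f)
  have "(e(s v := x)) \<circ> s = (e \<circ> s)(v := x)" for x
    using Ex.prems by (auto simp: fun_eq_iff inj_eq)
  then show ?case by (simp only: rename_fm.simps sat.simps Ex.IH[OF Ex.prems])
qed (auto simp: eval_rename_trm)

lemma fv_rename_trm: "fv_trm (rename_trm s t) = s ` fv_trm t"
  by (induction t) auto

lemma fv_rename_fm: "inj s \<Longrightarrow> fv (rename_fm s f) = s ` fv f"
  by (induction f) (auto simp: fv_rename_trm inj_eq)

lemma set_trm_rename_trm [simp]: "set_trm (rename_trm s t) = set_trm t"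
  by (induction t) auto

lemma set_fm_rename_fm [simp]: "set_fm (rename_fm s f) = set_fm f"
  by (induction f) auto

lemma map_trm_rename_trm [simp]: "map_trm h (rename_trm s t) = rename_trm s (map_trm h t)"
  by (induction t) auto

lemma map_fm_rename_fm [simp]: "map_fm h (rename_fm s f) = rename_fm s (map_fm h f)"
  by (induction f) auto

lemma fv_rename_transpose_single:
  "fv f \<subseteq> {0} \<Longrightarrow> fv (rename_fm (transpose 0 k) f) \<subseteq> {k}"
  by (auto simp: fv_rename_fm)

lemma sat_rename_transpose_single:
  assumes "fv f \<subseteq> {0}"
  shows "sat S D e (rename_fm (transpose 0 k) f) = sat S D (tenv [e k]) f"
proof -
  have "sat S D e (rename_fm (transpose 0 k) f) = sat S D (e \<circ> transpose 0 k) f"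
    by (simp add: sat_rename_fm)
  also have "\<dots> = sat S D (tenv [e k]) f"
    using sat_tenv_single[OF assms, of S D "e \<circ> transpose 0 k"] by simp
  finally show ?thesis .
qed

fun Exs :: "nat list \<Rightarrow> 'a fm \<Rightarrow> 'a fm" where
  "Exs [] f = f"
| "Exs (v # vs) f = Ex v (Exs vs f)"

definition Alls :: "nat list \<Rightarrow> 'a fm \<Rightarrow> 'a fm" where
  "Alls vs f = Neg (Exs vs (Neg f))"

lemma sat_Exs:
  "sat S UNIV e (Exs vs f) = (\<exists>e'. (\<forall>i. i \<notin> set vs \<longrightarrow> e' i = e i) \<and> sat S UNIV e' f)"
proof (induction vs arbitrary: e)
  case Nil
  have "(\<forall>i. e' i = e i) \<Longrightarrow> e' = e" for e' by auto
  then show ?case by auto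
next
  case (Cons v vs)
  show ?case
  proof
    assume "sat S UNIV e (Exs (v # vs) f)"
    then obtain x e' where "\<forall>i. i \<notin> set vs \<longrightarrow> e' i = (e(v := x)) i" "sat S UNIV e' f"
      using Cons by auto
    then show "\<exists>e'. (\<forall>i. i \<notin> set (v # vs) \<longrightarrow> e' i = e i) \<and> sat S UNIV e' f"
      by (intro exI[of _ e']) auto
  next
    assume "\<exists>e'. (\<forall>i. i \<notin> set (v # vs) \<longrightarrow> e' i = e i) \<and> sat S UNIV e' f"
    then obtain e' where e': "\<forall>i. i \<notin> set (v # vs) \<longrightarrow> e' i = e i" "sat S UNIV e' f"
      by blast
    then have "\<forall>i. i \<notin> set vs \<longrightarrow> e' i = (e(v := e' v)) i" by auto
    then have "sat S UNIV (e(v := e' v)) (Exs vs f)" using Cons.IH e'(2) by blast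
    then show "sat S UNIV e (Exs (v # vs) f)" by (simp only: Exs.simps sat.simps) blast
  qed
qed

lemma sat_Alls:
  "sat S UNIV e (Alls vs f) = (\<forall>e'. (\<forall>i. i \<notin> set vs \<longrightarrow> e' i = e i) \<longrightarrow> sat S UNIV e' f)"
  by (auto simp: Alls_def sat_Exs)

lemma fv_Exs [simp]: "fv (Exs vs f) = fv f - set vs"
  by (induction vs) auto

lemma fv_Alls [simp]: "fv (Alls vs f) = fv f - set vs"
  by (simp add: Alls_def)

lemma set_fm_Exs [simp]: "set_fm (Exs vs f) = set_fm f"
  by (induction vs) auto

lemma set_fm_Alls [simp]: "set_fm (Alls vs f) = set_fm f"
  by (simp add: Alls_def)

lemma map_fm_Exs [simp]: "map_fm h (Exs vs f) = Exs vs (map_fm h f)"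
  by (induction vs) auto

lemma map_fm_Alls [simp]: "map_fm h (Alls vs f) = Alls vs (map_fm h f)"
  by (simp add: Alls_def)

lemma sat_Exs_upt:
  "sat S UNIV e (Exs [k..<k + m] f) =
   (\<exists>d. length d = m \<and> sat S UNIV (\<lambda>i. if k \<le> i \<and> i < k + m then d ! (i - k) else e i) f)"
    (is "_ = (\<exists>d. _ \<and> sat S UNIV (?e d) f)")
proof
  assume "sat S UNIV e (Exs [k..<k + m] f)"
  then obtain e' where e': "\<forall>i. i \<notin> set [k..<k + m] \<longrightarrow> e' i = e i" "sat S UNIV e' f"
    by (auto simp: sat_Exs)
  define d where "d = map (\<lambda>i. e' (k + i)) [0..<m]"
  have "?e d i = e' i" for i
  proof (cases "k \<le> i \<and> i < k + m")
    case True
    then have "i - k < m" by arith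
    then have "d ! (i - k) = e' (k + (i - k))" unfolding d_def by simp
    then show ?thesis using True by simp
  next
    case False
    then show ?thesis using e'(1) by auto
  qed
  then have "?e d = e'" by (rule ext)
  then show "\<exists>d. length d = m \<and> sat S UNIV (?e d) f"
    using e'(2) by (intro exI[of _ d]) (simp add: d_def)
next
  assume "\<exists>d. length d = m \<and> sat S UNIV (?e d) f"
  then obtain d where "sat S UNIV (?e d) f" by blast
  moreover have "\<forall>i. i \<notin> set [k..<k + m] \<longrightarrow> ?e d i = e i" by simp
  ultimately show "sat S UNIV e (Exs [k..<k + m] f)"
    unfolding sat_Exs by (intro exI[of _ "?e d"]) (rule conjI)
qed

fun Conjs :: "'a fm list \<Rightarrow> 'a fm" where
  "Conjs [] = Eq Zero Zero"
| "Conjs (f # fs) = Conj f (Conjs fs)"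

lemma sat_Conjs [simp]: "sat S D e (Conjs fs) = (\<forall>f\<in>set fs. sat S D e f)"
  by (induction fs) auto

lemma fv_Conjs [simp]: "fv (Conjs fs) = (\<Union>f\<in>set fs. fv f)"
  by (induction fs) auto

lemma set_fm_Conjs [simp]: "set_fm (Conjs fs) = (\<Union>f\<in>set fs. set_fm f)"
  by (induction fs) auto

fun subst_trm :: "(nat \<rightharpoonup> 'a) \<Rightarrow> 'a trm \<Rightarrow> 'a trm" where
  "subst_trm g (Var v) = (case g v of Some c \<Rightarrow> Par c | None \<Rightarrow> Var v)"
| "subst_trm g (Par c) = Par c"
| "subst_trm g Zero = Zero"
| "subst_trm g One = One"
| "subst_trm g (Plus t u) = Plus (subst_trm g t) (subst_trm g u)"
| "subst_trm g (Minus t u) = Minus (subst_trm g t) (subst_trm g u)"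

fun subst_fm :: "(nat \<rightharpoonup> 'a) \<Rightarrow> 'a fm \<Rightarrow> 'a fm" where
  "subst_fm g (Eq t u) = Eq (subst_trm g t) (subst_trm g u)"
| "subst_fm g (Less t u) = Less (subst_trm g t) (subst_trm g u)"
| "subst_fm g (Cong k t u) = Cong k (subst_trm g t) (subst_trm g u)"
| "subst_fm g (Neg f) = Neg (subst_fm g f)"
| "subst_fm g (Conj f h) = Conj (subst_fm g f) (subst_fm g h)"
| "subst_fm g (Ex v f) = Ex v (subst_fm (g(v := None)) f)"

definition subst_env :: "(nat \<rightharpoonup> 'a) \<Rightarrow> (nat \<Rightarrow> 'a) \<Rightarrow> nat \<Rightarrow> 'a" where
  "subst_env g e i = (case g i of Some c \<Rightarrow> c | None \<Rightarrow> e i)"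

lemma eval_subst_trm: "eval S e (subst_trm g t) = eval S (subst_env g e) t"
  by (induction t) (auto simp: subst_env_def split: option.split)

lemma sat_subst_fm: "sat S D e (subst_fm g f) = sat S D (subst_env g e) f"
proof (induction f arbitrary: g e)
  case (Ex v f)
  have "subst_env (g(v := None)) (e(v := x)) = (subst_env g e)(v := x)" for x
    by (auto simp: subst_env_def fun_eq_iff split: option.split)
  then have "sat S D (e(v := x)) (subst_fm (g(v := None)) f) = sat S D ((subst_env g e)(v := x)) f"
    for x using Ex.IH by metis
  then show ?case by (simp only: subst_fm.simps sat.simps)
qed (auto simp: eval_subst_trm)

lemma fv_subst_trm: "fv_trm (subst_trm g t) = fv_trm t - dom g"
  by (induction t) (auto split: option.split)

lemma fv_subst_fm: "fv (subst_fm g f) = fv f - dom g"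
proof (induction f arbitrary: g)
  case (Ex v f)
  then show ?case by auto
qed (auto simp: fv_subst_trm)

lemma set_trm_subst_trm: "set_trm (subst_trm g t) \<subseteq> set_trm t \<union> ran g"
  by (induction t) (auto simp: ran_def split: option.split)

lemma set_fm_subst_fm: "set_fm (subst_fm g f) \<subseteq> set_fm f \<union> ran g"
proof (induction f arbitrary: g)
  case (Eq t u)
  then show ?case using set_trm_subst_trm[of g t] set_trm_subst_trm[of g u] by auto
next
  case (Less t u)
  then show ?case using set_trm_subst_trm[of g t] set_trm_subst_trm[of g u] by auto
next
  case (Cong k t u)
  then show ?case using set_trm_subst_trm[of g t] set_trm_subst_trm[of g u] by auto
next
  case (Neg f)
  then show ?case by simp
next
  case (Conj f h)
  then show ?case using Conj.IH[of g] by auto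
next
  case (Ex v f)
  have "ran (g(v := None)) \<subseteq> ran g"
    by (auto simp: ran_def)
  have "set_fm (subst_fm g (Ex v f)) = set_fm (subst_fm (g(v := None)) f)" by simp
  also have "\<dots> \<subseteq> set_fm f \<union> ran (g(v := None))" by (rule Ex.IH)
  also have "\<dots> \<subseteq> set_fm (Ex v f) \<union> ran g" using \<open>ran (g(v := None)) \<subseteq> ran g\<close> by auto
  finally show ?case .
qed

fun abstract_trm :: "('a \<Rightarrow> nat) \<Rightarrow> 'a trm \<Rightarrow> 'a trm" where
  "abstract_trm h (Var v) = Var v"
| "abstract_trm h (Par c) = Var (h c)"
| "abstract_trm h Zero = Zero"
| "abstract_trm h One = One"
| "abstract_trm h (Plus t u) = Plus (abstract_trm h t) (abstract_trm h u)"
| "abstract_trm h (Minus t u) = Minus (abstract_trm h t) (abstract_trm h u)"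

fun abstract_fm :: "('a \<Rightarrow> nat) \<Rightarrow> 'a fm \<Rightarrow> 'a fm" where
  "abstract_fm h (Eq t u) = Eq (abstract_trm h t) (abstract_trm h u)"
| "abstract_fm h (Less t u) = Less (abstract_trm h t) (abstract_trm h u)"
| "abstract_fm h (Cong k t u) = Cong k (abstract_trm h t) (abstract_trm h u)"
| "abstract_fm h (Neg f) = Neg (abstract_fm h f)"
| "abstract_fm h (Conj f g) = Conj (abstract_fm h f) (abstract_fm h g)"
| "abstract_fm h (Ex v f) = Ex v (abstract_fm h f)"

fun bound_vars :: "'a fm \<Rightarrow> nat set" where
  "bound_vars (Eq t u) = {}"
| "bound_vars (Less t u) = {}"
| "bound_vars (Cong k t u) = {}"
| "bound_vars (Neg f) = bound_vars f"
| "bound_vars (Conj f g) = bound_vars f \<union> bound_vars g"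
| "bound_vars (Ex v f) = insert v (bound_vars f)"

lemma finite_bound_vars [simp]: "finite (bound_vars f)"
  by (induction f) auto

lemma eval_abstract_trm:
  "\<forall>c\<in>set_trm t. e (h c) = c \<Longrightarrow> eval S e (abstract_trm h t) = eval S e t"
  by (induction t) auto

lemma sat_abstract_fm:
  "\<forall>c\<in>set_fm f. e (h c) = c \<and> h c \<notin> bound_vars f \<Longrightarrow> sat S D e (abstract_fm h f) = sat S D e f"
proof (induction f arbitrary: e)
  case (Ex v f)
  have "sat S D (e(v := x)) (abstract_fm h f) = sat S D (e(v := x)) f" for x
    by (rule Ex.IH) (use Ex.prems in auto)
  then show ?case by (simp only: abstract_fm.simps sat.simps)
qed (auto simp: eval_abstract_trm)

lemma set_trm_abstract_trm [simp]: "set_trm (abstract_trm h t) = {}"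
  by (induction t) auto

lemma set_fm_abstract_fm [simp]: "set_fm (abstract_fm h f) = {}"
  by (induction f) auto

lemma fv_abstract_trm: "fv_trm (abstract_trm h t) \<subseteq> fv_trm t \<union> h ` set_trm t"
  by (induction t) auto

lemma fv_abstract_fm: "fv (abstract_fm h f) \<subseteq> fv f \<union> h ` set_fm f"
proof (induction f)
  case (Eq t u)
  then show ?case using fv_abstract_trm[of h t] fv_abstract_trm[of h u] by auto
next
  case (Less t u)
  then show ?case using fv_abstract_trm[of h t] fv_abstract_trm[of h u] by auto
next
  case (Cong k t u)
  then show ?case using fv_abstract_trm[of h t] fv_abstract_trm[of h u] by auto
qed auto

section \<open>Order and least elements in models of Presburger arithmetic\<close>

lemma presburger_transfer:
  assumes pm: "presburger_model M" and par: "set_fm \<phi> = {}"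
    and valid: "\<And>e. sat Zstruct UNIV e (map_fm (\<lambda>_. 0) \<phi>)"
  shows "sat M UNIV e \<phi>"
proof -
  define vs where "vs = sorted_list_of_set (fv \<phi>)"
  have vs: "set vs = fv \<phi>"
    by (simp add: vs_def finite_fv)
  have "sat M UNIV (\<lambda>_. zero M) (Alls vs \<phi>)"
    using pm[unfolded presburger_model_def, rule_format, of "Alls vs \<phi>"]
    by (simp add: par vs sat_Alls valid)
  then have "sat M UNIV (\<lambda>i. if i \<in> fv \<phi> then e i else zero M) \<phi>"
    by (simp add: sat_Alls vs)
  moreover have "sat M UNIV (\<lambda>i. if i \<in> fv \<phi> then e i else zero M) \<phi> = sat M UNIV e \<phi>"
    by (rule sat_env_cong) simp
  ultimately show ?thesis by simp
qed

lemma presburger_less_linear: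
  assumes "presburger_model M"
  shows "less M x y \<or> x = y \<or> less M y x"
proof -
  have "sat M UNIV ((\<lambda>_. x)(1 := y))
      (Or (Less (Var 0) (Var 1)) (Or (Eq (Var 0) (Var 1)) (Less (Var 1) (Var 0))))"
    by (rule presburger_transfer[OF assms]) (auto simp: Zstruct_def)
  then show ?thesis by simp
qed

lemma presburger_less_trans:
  assumes "presburger_model M" "less M x y" "less M y z"
  shows "less M x z"
proof -
  have "sat M UNIV ((\<lambda>_. x)(1 := y, 2 := z))
      (Imp (Conj (Less (Var 0) (Var 1)) (Less (Var 1) (Var 2))) (Less (Var 0) (Var 2)))"
    by (rule presburger_transfer[OF assms(1)]) (auto simp: Zstruct_def)
  then show ?thesis using assms(2,3) by simp
qed

lemma less_dir_linear: "presburger_model M \<Longrightarrow> less_dir M d x y \<or> x = y \<or> less_dir M d y x"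
  using presburger_less_linear[of M x y] by (auto simp: less_dir_def)

lemma less_dir_trans:
  "presburger_model M \<Longrightarrow> less_dir M d x y \<Longrightarrow> less_dir M d y z \<Longrightarrow> less_dir M d x z"
  using presburger_less_trans by (auto simp: less_dir_def split: if_splits)

lemma finite_less_dir_least:
  assumes pm: "presburger_model M"
  shows "finite Y \<Longrightarrow> Y \<noteq> {} \<Longrightarrow> \<exists>m\<in>Y. \<forall>y\<in>Y. y = m \<or> less_dir M d m y"
proof (induction Y rule: finite_ne_induct)
  case (insert x F)
  then obtain m where m: "m \<in> F" "\<forall>y\<in>F. y = m \<or> less_dir M d m y" by blast
  show ?case
  proof (cases "less_dir M d x m")
    case True
    have "y = x \<or> less_dir M d x y" if "y \<in> insert x F" for y
      using that m True less_dir_trans[OF pm True] by auto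
    then show ?thesis by blast
  next
    case False
    then have "x = m \<or> less_dir M d m x" using less_dir_linear[OF pm] by blast
    then show ?thesis using m by blast
  qed
qed simp

definition least_or_unbounded :: "('b \<Rightarrow> 'b \<Rightarrow> bool) \<Rightarrow> ('b \<Rightarrow> bool) \<Rightarrow> bool" where
  "least_or_unbounded lt P \<longleftrightarrow>
     (\<nexists>x. P x) \<or> (\<exists>x. P x \<and> (\<forall>w. P w \<longrightarrow> \<not> lt w x)) \<or> (\<forall>z. \<exists>x. P x \<and> lt x z)"

lemma int_least_or_unbounded_less: "least_or_unbounded (<) (P :: int \<Rightarrow> bool)"
  unfolding least_or_unbounded_def
proof (cases "\<forall>z. \<exists>x. P x \<and> x < z")
  case False
  then obtain z where z: "\<forall>x. P x \<longrightarrow> \<not> x < z" by auto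
  show "(\<nexists>x. P x) \<or> (\<exists>x. P x \<and> (\<forall>w. P w \<longrightarrow> \<not> w < x)) \<or> (\<forall>z. \<exists>x. P x \<and> x < z)"
  proof (cases "\<exists>x. P x")
    case True
    then obtain x where x: "P x" by auto
    define Q where "Q n \<longleftrightarrow> P (z + int n)" for n
    have "z \<le> x" using x z by force
    then have "Q (nat (x - z))" using x by (simp add: Q_def)
    then have q: "Q (LEAST n. Q n)" by (rule LeastI)
    have "\<forall>w. P w \<longrightarrow> \<not> w < z + int (LEAST n. Q n)"
    proof (intro allI impI notI)
      fix w assume "P w" "w < z + int (LEAST n. Q n)"
      then have "Q (nat (w - z))" "nat (w - z) < (LEAST n. Q n)" using z by (auto simp: Q_def)
      then show False using not_less_Least by blast
    qed
    then show ?thesis using q by (auto simp: Q_def)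
  qed auto
qed auto

lemma int_least_or_unbounded_greater: "least_or_unbounded (>) (P :: int \<Rightarrow> bool)"
proof -
  have "least_or_unbounded (<) (\<lambda>x. P (- x))"
    by (rule int_least_or_unbounded_less)
  then show ?thesis
    unfolding least_or_unbounded_def by (metis minus_less_iff minus_minus)
qed

lemma Zstruct_least_or_unbounded: "least_or_unbounded (less_dir Zstruct d) (P :: int \<Rightarrow> bool)"
proof -
  have "less_dir Zstruct d = (if d then (<) else (>))"
    by (auto simp: fun_eq_iff less_dir_def Zstruct_def)
  then show ?thesis
    using int_least_or_unbounded_less int_least_or_unbounded_greater by simp
qed

text \<open>The scheme for the set defined by \<open>f\<close> in variable 0; variables 1 and 2 are bound, so they
  must not occur free in \<open>f\<close>.\<close>

definition Least_fm :: "bool \<Rightarrow> 'a fm \<Rightarrow> 'a fm" where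
  "Least_fm d f = Conj f (Forall 1 (Imp (rename_fm (transpose 0 1) f) (Neg (Less_dir d (Var 1) (Var 0)))))"

definition Least_or_unbounded_fm :: "bool \<Rightarrow> 'a fm \<Rightarrow> 'a fm" where
  "Least_or_unbounded_fm d f =
     Or (Neg (Ex 0 f)) (Or (Ex 0 (Least_fm d f)) (Forall 2 (Ex 0 (Conj f (Less_dir d (Var 0) (Var 2))))))"

lemma map_fm_Least_fm [simp]: "map_fm h (Least_fm d f) = Least_fm d (map_fm h f)"
  by (simp add: Least_fm_def)

lemma map_fm_Least_or_unbounded_fm [simp]:
  "map_fm h (Least_or_unbounded_fm d f) = Least_or_unbounded_fm d (map_fm h f)"
  by (simp add: Least_or_unbounded_fm_def)

lemma set_fm_Least_fm [simp]: "set_fm (Least_fm d f) = set_fm f"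
  by (simp add: Least_fm_def)

lemma set_fm_Least_or_unbounded_fm [simp]: "set_fm (Least_or_unbounded_fm d f) = set_fm f"
  by (simp add: Least_or_unbounded_fm_def)

lemma sat_Least_fm:
  assumes "1 \<notin> fv f"
  shows "sat S UNIV e (Least_fm d f) \<longleftrightarrow>
    sat S UNIV e f \<and> (\<forall>w. sat S UNIV (e(0 := w)) f \<longrightarrow> \<not> less_dir S d w (e 0))"
proof -
  have "sat S UNIV (e(1 := w)) (rename_fm (transpose 0 1) f) = sat S UNIV (e(0 := w)) f" for w
  proof -
    have "sat S UNIV (e(1 := w)) (rename_fm (transpose 0 1) f) = sat S UNIV ((e(1 := w)) \<circ> transpose 0 1) f"
      by (simp add: sat_rename_fm)
    also have "\<dots> = sat S UNIV (e(0 := w)) f"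
      by (rule sat_env_cong) (use assms in \<open>auto simp: transpose_def\<close>)
    finally show ?thesis .
  qed
  then show ?thesis by (simp add: Least_fm_def)
qed

lemma sat_Least_fm_single:
  assumes "fv f \<subseteq> {0}"
  shows "sat S UNIV e (Least_fm d f) \<longleftrightarrow>
    sat S UNIV (tenv [e 0]) f \<and> (\<forall>w. sat S UNIV (tenv [w]) f \<longrightarrow> \<not> less_dir S d w (e 0))"
proof -
  have "1 \<notin> fv f" using assms by auto
  moreover have "sat S UNIV (e(0 := w)) f = sat S UNIV (tenv [w]) f" for w
    by (rule sat_env_cong) (use assms in \<open>auto simp: tenv_nth\<close>)
  moreover have "sat S UNIV e f = sat S UNIV (tenv [e 0]) f"
    by (rule sat_tenv_single[OF assms])
  ultimately show ?thesis by (simp add: sat_Least_fm)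
qed

lemma sat_Least_or_unbounded_fm:
  assumes "1 \<notin> fv f" and "2 \<notin> fv f"
  shows "sat S UNIV e (Least_or_unbounded_fm d f) \<longleftrightarrow>
    least_or_unbounded (less_dir S d) (\<lambda>x. sat S UNIV (e(0 := x)) f)"
proof -
  have "sat S UNIV (e(2 := z, 0 := x)) f = sat S UNIV (e(0 := x)) f" for x z
    by (rule sat_env_cong) (use assms(2) in auto)
  then show ?thesis
    by (simp add: Least_or_unbounded_fm_def least_or_unbounded_def sat_Least_fm[OF assms(1)])
qed

text \<open>Abstracting the parameters to fresh variables (above 2 and above the bound variables of
  \<open>\<psi>\<close>) turns the instance of the scheme into a sentence that can be transferred from \<open>\<int>\<close>.\<close>

lemma presburger_least_or_unbounded:
  assumes pm: "presburger_model M" and fv\<psi>: "fv \<psi> \<subseteq> {0}"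
  shows "least_or_unbounded (less_dir M d) (\<lambda>x. sat M UNIV (tenv [x]) \<psi>)"
proof -
  obtain N where N: "\<forall>v\<in>bound_vars \<psi>. v < N"
    using finite_nat_set_iff_bounded finite_bound_vars by blast
  obtain f :: "'a \<Rightarrow> nat" where f: "inj_on f (set_fm \<psi>)"
    using finite_imp_inj_to_nat_seg[of "set_fm \<psi>"] by auto
  define h where "h c = N + 3 + f c" for c
  have h: "inj_on h (set_fm \<psi>)" using f by (auto simp: inj_on_def h_def)
  define \<chi> where "\<chi> = abstract_fm h \<psi>"
  have fv\<chi>: "fv \<chi> \<subseteq> {0} \<union> h ` set_fm \<psi>"
    using fv_abstract_fm[of h \<psi>] fv\<psi> unfolding \<chi>_def by blast
  then have \<chi>12: "1 \<notin> fv \<chi>" "2 \<notin> fv \<chi>" by (auto simp: h_def)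
  define e where "e i = (if i \<in> h ` set_fm \<psi> then inv_into (set_fm \<psi>) h i else zero M)" for i
  have "sat M UNIV e (Least_or_unbounded_fm d \<chi>)"
  proof (rule presburger_transfer[OF pm])
    show "set_fm (Least_or_unbounded_fm d \<chi>) = {}" by (simp add: \<chi>_def)
    show "sat Zstruct UNIV e' (map_fm (\<lambda>_. 0) (Least_or_unbounded_fm d \<chi>))" for e'
      using \<chi>12 by (simp add: sat_Least_or_unbounded_fm Zstruct_least_or_unbounded)
  qed
  moreover have "sat M UNIV (e(0 := x)) \<chi> = sat M UNIV (tenv [x]) \<psi>" for x
  proof -
    have "\<forall>c\<in>set_fm \<psi>. (e(0 := x)) (h c) = c \<and> h c \<notin> bound_vars \<psi>"
    proof
      fix c assume c: "c \<in> set_fm \<psi>"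
      have "h c \<noteq> 0" "N \<le> h c" by (simp_all add: h_def)
      then show "(e(0 := x)) (h c) = c \<and> h c \<notin> bound_vars \<psi>"
        using c h N by (auto simp: e_def)
    qed
    then have "sat M UNIV (e(0 := x)) \<chi> = sat M UNIV (e(0 := x)) \<psi>"
      unfolding \<chi>_def by (rule sat_abstract_fm)
    also have "\<dots> = sat M UNIV (tenv [x]) \<psi>"
      using sat_tenv_single[OF fv\<psi>, of M UNIV "e(0 := x)"] by simp
    finally show ?thesis .
  qed
  ultimately show ?thesis
    using \<chi>12 by (simp add: sat_Least_or_unbounded_fm)
qed

lemma elem_sub_least_witness:
  assumes es: "elem_sub M M0" and \<psi>: "\<psi> \<in> fmls M0 1"
    and least: "\<exists>x. sat M UNIV (tenv [x]) \<psi> \<and> (\<forall>w. sat M UNIV (tenv [w]) \<psi> \<longrightarrow> \<not> less_dir M d w x)"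
  shows "\<exists>x\<in>M0. sat M UNIV (tenv [x]) \<psi> \<and> (\<forall>w. sat M UNIV (tenv [w]) \<psi> \<longrightarrow> \<not> less_dir M d w x)"
proof -
  have fv\<psi>: "fv \<psi> \<subseteq> {0}" and par\<psi>: "set_fm \<psi> \<subseteq> M0" using \<psi> by (auto simp: fmls_def)
  note sat_Least = sat_Least_fm_single[OF fv\<psi>, of M]
  obtain m0 where m0: "m0 \<in> M0" using es by (auto simp: elem_sub_def)
  have elementary: "sat M M0 e \<phi> = sat M UNIV e \<phi>"
    if "set_fm \<phi> \<subseteq> M0" "\<forall>v\<in>fv \<phi>. e v \<in> M0" for \<phi> e
    using es that by (simp add: elem_sub_def)
  have "sat M UNIV (\<lambda>_. m0) (Ex 0 (Least_fm d \<psi>))"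
    using least by (auto simp: sat_Least)
  then have "sat M M0 (\<lambda>_. m0) (Ex 0 (Least_fm d \<psi>))"
    using elementary[of "Ex 0 (Least_fm d \<psi>)"] par\<psi> m0 by simp
  then obtain x where x: "x \<in> M0" "sat M M0 ((\<lambda>_. m0)(0 := x)) (Least_fm d \<psi>)"
    by auto
  then have "sat M UNIV ((\<lambda>_. m0)(0 := x)) (Least_fm d \<psi>)"
    using elementary[of "Least_fm d \<psi>"] par\<psi> m0 by simp
  then show ?thesis using x(1) by (auto simp: sat_Least)
qed

lemma same_cut_less_dir:
  assumes "x \<in> M0" and "same_cut M M0 y t" and "less_dir M d x t"
  shows "less_dir M d x y"
proof -
  have "Less_dir d (Par x) (Var 0) \<in> fmls M0 1" "order_fm (Less_dir d (Par x) (Var 0))"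
    using assms(1) by (auto simp: fmls_def)
  then have "sat M UNIV (tenv [y]) (Less_dir d (Par x) (Var 0))
      \<longleftrightarrow> sat M UNIV (tenv [t]) (Less_dir d (Par x) (Var 0))"
    using assms(2) unfolding same_cut_def by blast
  then show ?thesis using assms(3) by (simp add: tenv_nth)
qed

lemma definable_beyond_finite_cut:
  assumes pm: "presburger_model M" and es: "elem_sub M M0"
    and \<psi>: "\<psi> \<in> fmls M0 1" and t\<psi>: "sat M UNIV (tenv [t]) \<psi>" and tM0: "t \<notin> M0"
    and Y: "finite Y" "\<forall>y\<in>Y. same_cut M M0 y t"
  shows "\<exists>b. sat M UNIV (tenv [b]) \<psi> \<and> (\<forall>y\<in>Y. less_dir M d b y)"
proof -
  define P where "P x \<longleftrightarrow> sat M UNIV (tenv [x]) \<psi>" for x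
  have "least_or_unbounded (less_dir M d) P"
    unfolding P_def using \<psi> by (intro presburger_least_or_unbounded[OF pm]) (auto simp: fmls_def)
  then consider "\<forall>z. \<exists>x. P x \<and> less_dir M d x z" | "\<exists>x. P x \<and> (\<forall>w. P w \<longrightarrow> \<not> less_dir M d w x)"
    using t\<psi> by (auto simp: least_or_unbounded_def P_def)
  then show ?thesis
  proof cases
    case 1
    show ?thesis
    proof (cases "Y = {}")
      case False
      then obtain m where m: "m \<in> Y" "\<forall>y\<in>Y. y = m \<or> less_dir M d m y"
        using finite_less_dir_least[OF pm Y(1)] by blast
      obtain x where x: "P x" "less_dir M d x m" using 1 by blast
      have "less_dir M d x y" if "y \<in> Y" for y
        using m(2) that x(2) less_dir_trans[OF pm x(2)] by auto
      then show ?thesis using x(1) unfolding P_def by blast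
    qed (use t\<psi> in blast)
  next
    case 2
    then obtain x where x: "x \<in> M0" "P x" "\<forall>w. P w \<longrightarrow> \<not> less_dir M d w x"
      using elem_sub_least_witness[OF es \<psi>] unfolding P_def by blast
    have "t \<noteq> x" using x(1) tM0 by blast
    then have xt: "less_dir M d x t"
      using x(3) t\<psi> less_dir_linear[OF pm, of d x t] unfolding P_def by blast
    then have "\<forall>y\<in>Y. less_dir M d x y"
      using same_cut_less_dir[OF x(1)] Y(2) by blast
    then show ?thesis using x(2) unfolding P_def by blast
  qed
qed

section \<open>Realising types of tuples in a saturated model\<close>

lemma small_Un_finite:
  assumes A: "small A" and B: "finite B" and inf: "infinite (UNIV :: 'a set)"
  shows "small (A \<union> (B :: 'a set))"
proof -
  have "(card_of B, card_of (UNIV :: 'a set)) \<in> ordLess"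
    using finite_ordLess_infinite[of "card_of B" "card_of (UNIV :: 'a set)"] B inf
    by (simp add: card_of_Well_order card_of_well_order_on Field_card_of)
  then show ?thesis
    using card_of_Un_ordLess_infinite[OF inf] A unfolding small_def by blast
qed

definition finitely_extendable :: "'a pres_struct \<Rightarrow> 'a fm set \<Rightarrow> nat \<Rightarrow> 'a list \<Rightarrow> bool" where
  "finitely_extendable M \<Gamma> n c \<longleftrightarrow>
     (\<forall>F. F \<subseteq> \<Gamma> \<longrightarrow> finite F \<longrightarrow>
        (\<exists>d. length d = n - length c \<and> (\<forall>\<phi>\<in>F. sat M UNIV (tenv (c @ d)) \<phi>)))"

definition next_coord_fm :: "'a list \<Rightarrow> nat \<Rightarrow> 'a fm \<Rightarrow> 'a fm" where
  "next_coord_fm c n f = rename_fm (transpose 0 (length c))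
     (subst_fm (\<lambda>i. if i < length c then Some (c ! i) else None) (Exs [Suc (length c)..<n] f))"

lemma sat_next_coord_fm:
  assumes k: "length c < n" and fv: "fv f \<subseteq> {..<n}"
  shows "sat M UNIV (tenv [x]) (next_coord_fm c n f) \<longleftrightarrow>
    (\<exists>d. length d = n - Suc (length c) \<and> sat M UNIV (tenv (c @ x # d)) f)"
proof -
  define k where "k = length c"
  define m where "m = n - Suc k"
  define g where "g i = (if i < k then Some (c ! i) else None)" for i
  define e where "e = subst_env g (tenv [x] \<circ> transpose 0 k)"
  define e' where "e' d i = (if Suc k \<le> i \<and> i < Suc k + m then d ! (i - Suc k) else e i)" for d i
  have upt: "[Suc k..<n] = [Suc k..<Suc k + m]" using k by (simp add: k_def m_def)
  have "next_coord_fm c n f = rename_fm (transpose 0 k) (subst_fm g (Exs [Suc k..<Suc k + m] f))"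
    by (simp only: next_coord_fm_def k_def[symmetric] g_def[symmetric] upt)
  then have "sat M UNIV (tenv [x]) (next_coord_fm c n f) = sat M UNIV e (Exs [Suc k..<Suc k + m] f)"
    by (simp only: sat_rename_fm[OF inj_transpose] sat_subst_fm e_def)
  also have "\<dots> = (\<exists>d. length d = m \<and> sat M UNIV (e' d) f)"
    unfolding e'_def by (rule sat_Exs_upt)
  also have "\<dots> = (\<exists>d. length d = m \<and> sat M UNIV (tenv (c @ x # d)) f)"
  proof -
    have "sat M UNIV (e' d) f = sat M UNIV (tenv (c @ x # d)) f" for d
    proof (rule sat_env_cong, intro ballI)
      fix v assume "v \<in> fv f"
      then have "v < n" using fv by auto
      consider "v < k" | "v = k" | "Suc k \<le> v" "v < Suc k + m" using \<open>v < n\<close> k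
        by (fastforce simp: k_def m_def)
      then show "e' d v = tenv (c @ x # d) v"
      proof cases
        case 3
        then have "v - k = Suc (v - Suc k)" by arith
        then show ?thesis using 3 by (simp add: e'_def k_def tenv_nth nth_append)
      qed (simp_all add: e'_def e_def subst_env_def g_def k_def tenv_nth nth_append)
    qed
    then show ?thesis by simp
  qed
  finally show ?thesis by (simp add: k_def m_def)
qed

lemma next_coord_fm_fmls:
  assumes k: "length c < n" and f: "f \<in> fmls A n"
  shows "next_coord_fm c n f \<in> fmls (A \<union> set c) 1"
proof -
  let ?g = "\<lambda>i. if i < length c then Some (c ! i) else None"
  let ?E = "Exs [Suc (length c)..<n] f"
  have "ran ?g \<subseteq> set c" by (auto simp: ran_def split: if_splits)
  then have "set_fm (next_coord_fm c n f) \<subseteq> A \<union> set c"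
    using set_fm_subst_fm[of ?g ?E] f by (auto simp: next_coord_fm_def fmls_def)
  moreover have "fv (subst_fm ?g ?E) \<subseteq> {length c}"
    using f by (auto simp: fv_subst_fm fmls_def dom_def split: if_splits)
  then have "fv (next_coord_fm c n f) \<subseteq> {0}"
    unfolding next_coord_fm_def fv_rename_fm[OF inj_transpose] by auto
  ultimately show ?thesis by (auto simp: fmls_def)
qed

lemma sat_next_coord_fm_Conjs:
  assumes \<Gamma>: "\<Gamma> \<subseteq> fmls A n" and k: "length c < n" and L: "set L \<subseteq> \<Gamma>"
  shows "sat M UNIV (tenv [x]) (next_coord_fm c n (Conjs L)) \<longleftrightarrow>
    (\<exists>d. length d = n - Suc (length c) \<and> (\<forall>\<phi>\<in>set L. sat M UNIV (tenv (c @ x # d)) \<phi>))"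
proof -
  have "fv (Conjs L) \<subseteq> {..<n}" using L \<Gamma> by (auto simp: fmls_def)
  then show ?thesis using sat_next_coord_fm[OF k] by simp
qed

lemma finitely_extendable_snoc_iff:
  assumes \<Gamma>: "\<Gamma> \<subseteq> fmls A n" and k: "length c < n"
  shows "finitely_extendable M \<Gamma> n (c @ [x]) \<longleftrightarrow>
    (\<forall>L. set L \<subseteq> \<Gamma> \<longrightarrow> sat M UNIV (tenv [x]) (next_coord_fm c n (Conjs L)))"
proof
  assume ext: "finitely_extendable M \<Gamma> n (c @ [x])"
  show "\<forall>L. set L \<subseteq> \<Gamma> \<longrightarrow> sat M UNIV (tenv [x]) (next_coord_fm c n (Conjs L))"
  proof (intro allI impI)
    fix L assume L: "set L \<subseteq> \<Gamma>"
    then obtain d where "length d = n - Suc (length c)" "\<forall>\<phi>\<in>set L. sat M UNIV (tenv (c @ x # d)) \<phi>"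
      using ext[unfolded finitely_extendable_def, rule_format, of "set L"] by auto
    then show "sat M UNIV (tenv [x]) (next_coord_fm c n (Conjs L))"
      using sat_next_coord_fm_Conjs[OF \<Gamma> k L] by blast
  qed
next
  assume x: "\<forall>L. set L \<subseteq> \<Gamma> \<longrightarrow> sat M UNIV (tenv [x]) (next_coord_fm c n (Conjs L))"
  show "finitely_extendable M \<Gamma> n (c @ [x])"
    unfolding finitely_extendable_def
  proof (intro allI impI)
    fix F assume F: "F \<subseteq> \<Gamma>" "finite F"
    then obtain L where L: "set L = F" using finite_list by blast
    then have L\<Gamma>: "set L \<subseteq> \<Gamma>" using F(1) by simp
    then have "sat M UNIV (tenv [x]) (next_coord_fm c n (Conjs L))" using x by blast
    then obtain d where "length d = n - Suc (length c)" "\<forall>\<phi>\<in>set L. sat M UNIV (tenv (c @ x # d)) \<phi>"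
      using sat_next_coord_fm_Conjs[OF \<Gamma> k L\<Gamma>] by blast
    then show "\<exists>d. length d = n - length (c @ [x]) \<and> (\<forall>\<phi>\<in>F. sat M UNIV (tenv ((c @ [x]) @ d)) \<phi>)"
      using L by (intro exI[of _ d]) simp
  qed
qed

lemma finitely_extendable_next_coord:
  assumes \<Gamma>: "\<Gamma> \<subseteq> fmls A n" and k: "length c < n" and c: "finitely_extendable M \<Gamma> n c"
    and Ls: "finite Ls" "\<forall>L\<in>Ls. set L \<subseteq> \<Gamma>"
  shows "\<exists>x. \<forall>L\<in>Ls. sat M UNIV (tenv [x]) (next_coord_fm c n (Conjs L))"
proof -
  have "(\<Union>L\<in>Ls. set L) \<subseteq> \<Gamma>" "finite (\<Union>L\<in>Ls. set L)" using Ls by auto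
  then obtain d where d: "length d = n - length c"
    "\<forall>\<phi>\<in>(\<Union>L\<in>Ls. set L). sat M UNIV (tenv (c @ d)) \<phi>"
    using c unfolding finitely_extendable_def by blast
  then obtain x d' where "d = x # d'" using k by (cases d) auto
  then have d': "length d' = n - Suc (length c)"
    "\<forall>L\<in>Ls. \<forall>\<phi>\<in>set L. sat M UNIV (tenv (c @ x # d')) \<phi>"
    using d by auto
  have "sat M UNIV (tenv [x]) (next_coord_fm c n (Conjs L))" if L: "L \<in> Ls" for L
    using sat_next_coord_fm_Conjs[OF \<Gamma> k, of L] d' L Ls(2) by blast
  then show ?thesis by blast
qed

lemma saturated_extend:
  fixes M :: "'a pres_struct"
  assumes satd: "saturated M" and sm: "small A" and inf: "infinite (UNIV :: 'a set)"
    and \<Gamma>: "\<Gamma> \<subseteq> fmls A n" and k: "length c < n" and c: "finitely_extendable M \<Gamma> n c"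
  shows "\<exists>x. finitely_extendable M \<Gamma> n (c @ [x])"
proof -
  define \<Phi> where "\<Phi> = (\<lambda>L. next_coord_fm c n (Conjs L)) ` {L. set L \<subseteq> \<Gamma>}"
  have \<Phi>_fmls: "\<Phi> \<subseteq> fmls (A \<union> set c) 1"
  proof
    fix \<phi> assume "\<phi> \<in> \<Phi>"
    then obtain L where L: "set L \<subseteq> \<Gamma>" "\<phi> = next_coord_fm c n (Conjs L)" by (auto simp: \<Phi>_def)
    have "Conjs L \<in> fmls A n" using L(1) \<Gamma> by (auto simp: fmls_def)
    then show "\<phi> \<in> fmls (A \<union> set c) 1"
      unfolding L(2) by (rule next_coord_fm_fmls[OF k])
  qed
  have small: "small (A \<union> set c)" by (rule small_Un_finite[OF sm finite_set inf])
  have fin: "\<exists>x. \<forall>\<phi>\<in>F. sat M UNIV (tenv [x]) \<phi>" if F: "F \<subseteq> \<Phi>" "finite F" for F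
  proof -
    obtain Ls where Ls: "Ls \<subseteq> {L. set L \<subseteq> \<Gamma>}" "finite Ls" "F = (\<lambda>L. next_coord_fm c n (Conjs L)) ` Ls"
      using finite_subset_image[OF F(2) F(1)[unfolded \<Phi>_def]] by blast
    then show ?thesis
      using finitely_extendable_next_coord[OF \<Gamma> k c Ls(2)] by blast
  qed
  obtain x where "\<forall>\<phi>\<in>\<Phi>. sat M UNIV (tenv [x]) \<phi>"
    using satd[unfolded saturated_def, rule_format, OF small \<Phi>_fmls fin] by blast
  then have "finitely_extendable M \<Gamma> n (c @ [x])"
    unfolding finitely_extendable_snoc_iff[OF \<Gamma> k] \<Phi>_def by blast
  then show ?thesis ..
qed

lemma saturated_realizes:
  fixes M :: "'a pres_struct"
  assumes satd: "saturated M" and sm: "small A" and inf: "infinite (UNIV :: 'a set)"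
    and \<Gamma>: "\<Gamma> \<subseteq> fmls A n"
    and fin: "\<forall>F. F \<subseteq> \<Gamma> \<longrightarrow> finite F \<longrightarrow> (\<exists>b. length b = n \<and> (\<forall>\<phi>\<in>F. sat M UNIV (tenv b) \<phi>))"
  shows "\<exists>b. length b = n \<and> (\<forall>\<phi>\<in>\<Gamma>. sat M UNIV (tenv b) \<phi>)"
proof -
  have "\<exists>c. length c = k \<and> finitely_extendable M \<Gamma> n c" if "k \<le> n" for k
    using that
  proof (induction k)
    case 0
    have "finitely_extendable M \<Gamma> n []"
      using fin by (simp add: finitely_extendable_def)
    then show ?case by (intro exI[of _ "[]"]) simp
  next
    case (Suc k)
    then obtain c where c: "length c = k" "finitely_extendable M \<Gamma> n c" by auto
    moreover have "length c < n" using c(1) Suc.prems by simp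
    ultimately obtain x where "finitely_extendable M \<Gamma> n (c @ [x])"
      using saturated_extend[OF satd sm inf \<Gamma>] by blast
    then show ?case using c(1) by (intro exI[of _ "c @ [x]"]) simp
  qed
  then obtain b where b: "length b = n" "finitely_extendable M \<Gamma> n b" by blast
  have "sat M UNIV (tenv b) \<phi>" if \<phi>: "\<phi> \<in> \<Gamma>" for \<phi>
  proof -
    obtain d where "length d = n - length b" "sat M UNIV (tenv (b @ d)) \<phi>"
      using b(2)[unfolded finitely_extendable_def, rule_format, of "{\<phi>}"] \<phi> by auto
    then show ?thesis using b(1) by simp
  qed
  then show ?thesis using b(1) by blast
qed

section \<open>Values of the definable function beyond the cut\<close>

definition Proj_last_fm :: "nat \<Rightarrow> 'a fm \<Rightarrow> 'a fm" where
  "Proj_last_fm n g = rename_fm (transpose 0 n) (Exs [0..<n] g)"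

lemma sat_Proj_last_fm:
  assumes fv: "fv g \<subseteq> {..<Suc n}"
  shows "sat M UNIV (tenv [x]) (Proj_last_fm n g) \<longleftrightarrow>
    (\<exists>b. length b = n \<and> sat M UNIV (tenv (b @ [x])) g)"
proof -
  define e where "e = tenv [x] \<circ> transpose 0 n"
  define e' where "e' d i = (if 0 \<le> i \<and> i < 0 + n then d ! (i - 0) else e i)" for d i
  have "sat M UNIV (tenv [x]) (Proj_last_fm n g) = sat M UNIV e (Exs [0..<0 + n] g)"
    by (simp add: Proj_last_fm_def sat_rename_fm e_def)
  also have "\<dots> = (\<exists>d. length d = n \<and> sat M UNIV (e' d) g)"
    unfolding e'_def by (rule sat_Exs_upt)
  also have "\<dots> = (\<exists>d. length d = n \<and> sat M UNIV (tenv (d @ [x])) g)"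
  proof -
    have "sat M UNIV (e' d) g = sat M UNIV (tenv (d @ [x])) g" if "length d = n" for d
    proof (rule sat_env_cong, intro ballI)
      fix v assume "v \<in> fv g"
      then consider "v < n" | "v = n" using fv by fastforce
      then show "e' d v = tenv (d @ [x]) v"
        by cases (simp_all add: e'_def e_def tenv_nth nth_append that)
    qed
    then show ?thesis by auto
  qed
  finally show ?thesis .
qed

lemma Proj_last_fm_fmls: "g \<in> fmls A (Suc n) \<Longrightarrow> Proj_last_fm n g \<in> fmls A 1"
  by (auto simp: Proj_last_fm_def fmls_def fv_rename_fm transpose_def)

definition Value_less_fm :: "nat \<Rightarrow> bool \<Rightarrow> 'a fm \<Rightarrow> 'a fm \<Rightarrow> 'a fm" where
  "Value_less_fm n d \<phi> \<delta> = Ex n (Ex (Suc n)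
     (Conj \<phi> (Conj (rename_fm (transpose 0 (Suc n)) \<delta>) (Less_dir d (Var n) (Var (Suc n))))))"

lemma sat_Value_less_fm:
  assumes fv\<phi>: "fv \<phi> \<subseteq> {..<Suc n}" and fv\<delta>: "fv \<delta> \<subseteq> {0}" and b: "length b = n"
  shows "sat M UNIV (tenv b) (Value_less_fm n d \<phi> \<delta>) \<longleftrightarrow>
    (\<exists>z w. sat M UNIV (tenv (b @ [z])) \<phi> \<and> sat M UNIV (tenv [w]) \<delta> \<and> less_dir M d z w)"
proof -
  define e where "e z w = (tenv b)(n := z, Suc n := w)" for z w
  have "sat M UNIV (e z w) \<phi> = sat M UNIV (tenv (b @ [z])) \<phi>" for z w
  proof (rule sat_env_cong, intro ballI)
    fix v assume "v \<in> fv \<phi>"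
    then consider "v < n" | "v = n" using fv\<phi> by fastforce
    then show "e z w v = tenv (b @ [z]) v"
      by cases (simp_all add: e_def tenv_nth nth_append b)
  qed
  moreover have "sat M UNIV (e z w) (rename_fm (transpose 0 (Suc n)) \<delta>) = sat M UNIV (tenv [w]) \<delta>"
    for z w by (simp add: sat_rename_transpose_single[OF fv\<delta>] e_def)
  ultimately show ?thesis
    by (simp add: Value_less_fm_def e_def)
qed

lemma Value_less_fm_fmls:
  assumes "\<phi> \<in> fmls A (Suc n)" and "\<delta> \<in> fmls A 1"
  shows "Value_less_fm n d \<phi> \<delta> \<in> fmls A n"
proof -
  have "fv (rename_fm (transpose 0 (Suc n)) \<delta>) \<subseteq> {Suc n}"
    using assms(2) by (intro fv_rename_transpose_single) (auto simp: fmls_def)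
  then show ?thesis using assms by (auto simp: Value_less_fm_def fmls_def)
qed

text \<open>The elements of the cut enter only through their defining formulas, which keeps the type
  realised below over the small set \<open>a\<M>\<^sub>0\<close>.\<close>

lemma definable_value_less_fm:
  assumes y: "y \<in> dcl M A" and \<phi>: "\<phi> \<in> fmls A (Suc n)"
  shows "\<exists>\<theta>\<in>fmls A n. \<forall>b. length b = n \<longrightarrow>
    (sat M UNIV (tenv b) \<theta> \<longleftrightarrow> (\<exists>z. sat M UNIV (tenv (b @ [z])) \<phi> \<and> less_dir M d z y))"
proof -
  obtain \<delta> where \<delta>: "\<delta> \<in> fmls A 1" "{x. sat M UNIV (tenv [x]) \<delta>} = {y}"
    using y by (auto simp: dcl_def)
  have "fv \<phi> \<subseteq> {..<Suc n}" "fv \<delta> \<subseteq> {0}"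
    using \<phi> \<delta>(1) by (auto simp: fmls_def)
  moreover have "sat M UNIV (tenv [w]) \<delta> \<longleftrightarrow> w = y" for w
    using \<delta>(2) by blast
  ultimately have "sat M UNIV (tenv b) (Value_less_fm n d \<phi> \<delta>) \<longleftrightarrow>
      (\<exists>z. sat M UNIV (tenv (b @ [z])) \<phi> \<and> less_dir M d z y)" if "length b = n" for b
    using sat_Value_less_fm[OF _ _ that] by simp
  then show ?thesis using Value_less_fm_fmls[OF \<phi> \<delta>(1)] by blast
qed

lemma finitely_satisfiable_beyond_cut:
  assumes pm: "presburger_model M" and es: "elem_sub M M0"
    and F: "finite F" "F \<subseteq> fmls M0 n" and \<phi>: "\<phi> \<in> fmls M0 (Suc n)"
    and a: "length a = n" "\<forall>f\<in>F. sat M UNIV (tenv a) f" "sat M UNIV (tenv (a @ [t])) \<phi>"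
    and tM0: "t \<notin> M0" and Y: "finite Y" "\<forall>y\<in>Y. same_cut M M0 y t"
  shows "\<exists>b z. length b = n \<and> (\<forall>f\<in>F. sat M UNIV (tenv b) f) \<and>
    sat M UNIV (tenv (b @ [z])) \<phi> \<and> (\<forall>y\<in>Y. less_dir M d z y)"
proof -
  obtain L where L: "set L = F" using finite_list[OF F(1)] by blast
  define g where "g = Conj (Conjs L) \<phi>"
  have "\<forall>f\<in>set L. set_fm f \<subseteq> M0 \<and> fv f \<subseteq> {..<n}"
    using F(2) L unfolding fmls_def by blast
  then have g: "g \<in> fmls M0 (Suc n)"
    using \<phi> unfolding g_def fmls_def by fastforce
  have g_sat: "sat M UNIV (tenv (b @ [z])) g \<longleftrightarrow>
      (\<forall>f\<in>F. sat M UNIV (tenv b) f) \<and> sat M UNIV (tenv (b @ [z])) \<phi>" if "length b = n" for b z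
  proof -
    have "sat M UNIV (tenv (b @ [z])) f = sat M UNIV (tenv b) f" if "f \<in> F" for f
      using F(2) that \<open>length b = n\<close> by (intro sat_tenv_append) (auto simp: fmls_def)
    then show ?thesis using L by (auto simp: g_def)
  qed
  have g_fv: "fv g \<subseteq> {..<Suc n}" using g by (simp add: fmls_def)
  have "sat M UNIV (tenv [t]) (Proj_last_fm n g)"
    using a g_sat[OF a(1)] by (auto simp: sat_Proj_last_fm[OF g_fv])
  then obtain z where z: "sat M UNIV (tenv [z]) (Proj_last_fm n g)" "\<forall>y\<in>Y. less_dir M d z y"
    using definable_beyond_finite_cut[OF pm es Proj_last_fm_fmls[OF g] _ tM0 Y] by blast
  then obtain b where "length b = n" "sat M UNIV (tenv (b @ [z])) g"
    by (auto simp: sat_Proj_last_fm[OF g_fv])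
  then show ?thesis using z(2) g_sat by blast
qed

lemma finitely_satisfiable_type_beyond_cut:
  assumes pm: "presburger_model M" and es: "elem_sub M M0"
    and p: "p \<subseteq> fmls M0 n" and \<phi>: "\<phi> \<in> fmls M0 (Suc n)"
    and a: "length a = n" "\<forall>f\<in>p. sat M UNIV (tenv a) f" "sat M UNIV (tenv (a @ [t])) \<phi>"
    and tM0: "t \<notin> M0" and Y: "\<forall>y\<in>Y. same_cut M M0 y t"
    and \<theta>: "\<And>y b. y \<in> Y \<Longrightarrow> length b = n \<Longrightarrow>
      sat M UNIV (tenv b) (\<theta> y) \<longleftrightarrow> (\<exists>z. sat M UNIV (tenv (b @ [z])) \<phi> \<and> less_dir M d z y)"
  shows "\<forall>F. F \<subseteq> p \<union> \<theta> ` Y \<longrightarrow> finite F \<longrightarrow> (\<exists>b. length b = n \<and> (\<forall>\<psi>\<in>F. sat M UNIV (tenv b) \<psi>))"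
proof (intro allI impI)
  fix F assume F: "F \<subseteq> p \<union> \<theta> ` Y" "finite F"
  have "F - p \<subseteq> \<theta> ` Y" using F(1) by blast
  from finite_subset_image[OF finite_Diff[OF F(2)] this]
  obtain Y' where Y': "Y' \<subseteq> Y" "finite Y'" "F - p = \<theta> ` Y'"
    by blast
  have Fp: "finite (F \<inter> p)" "F \<inter> p \<subseteq> fmls M0 n" "\<forall>f\<in>F \<inter> p. sat M UNIV (tenv a) f"
    using F(2) p a(2) by auto
  have cut: "\<forall>y\<in>Y'. same_cut M M0 y t" using Y Y'(1) by blast
  obtain b z where b: "length b = n" "\<forall>f\<in>F \<inter> p. sat M UNIV (tenv b) f"
    "sat M UNIV (tenv (b @ [z])) \<phi>" "\<forall>y\<in>Y'. less_dir M d z y"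
    using finitely_satisfiable_beyond_cut[OF pm es Fp(1,2) \<phi> a(1) Fp(3) a(3) tM0 Y'(2) cut]
    by blast
  have "sat M UNIV (tenv b) \<psi>" if \<psi>: "\<psi> \<in> F" for \<psi>
  proof (cases "\<psi> \<in> p")
    case True
    then show ?thesis using \<psi> b(2) by blast
  next
    case False
    then obtain y where y: "y \<in> Y'" "\<psi> = \<theta> y" using \<psi> Y'(3) by blast
    then have "y \<in> Y" using Y'(1) by blast
    moreover have "\<exists>z. sat M UNIV (tenv (b @ [z])) \<phi> \<and> less_dir M d z y" using b(3,4) y(1) by blast
    ultimately show ?thesis using \<theta>[OF _ b(1)] y(2) by simp
  qed
  then show "\<exists>b. length b = n \<and> (\<forall>\<psi>\<in>F. sat M UNIV (tenv b) \<psi>)" using b(1) by blast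
qed

lemma realization_beyond_cut:
  fixes M :: "'a pres_struct"
  assumes pm: "presburger_model M" and satd: "saturated M" and es: "elem_sub M M0"
    and sm: "small M0" and inf: "infinite (UNIV :: 'a set)" and p: "p \<subseteq> fmls M0 n"
    and rd: "rel_definable M M0 n (realizations M n p) \<alpha>"
    and a: "a \<in> realizations M n p" and tM0: "\<alpha> a \<notin> M0"
  shows "\<exists>a'\<in>realizations M n p.
    \<forall>y\<in>dcl M (set a \<union> M0) \<inter> {y. same_cut M M0 y (\<alpha> a)}. less_dir M d (\<alpha> a') y"
proof -
  obtain \<phi> where \<phi>: "\<phi> \<in> fmls M0 (Suc n)"
    and uniq: "\<And>b. length b = n \<Longrightarrow> \<exists>!y. sat M UNIV (tenv (b @ [y])) \<phi>"
    and graph: "\<And>b. b \<in> realizations M n p \<Longrightarrow> sat M UNIV (tenv (b @ [\<alpha> b])) \<phi>"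
    using rd unfolding rel_definable_def by blast
  have la: "length a = n" and ap: "\<forall>f\<in>p. sat M UNIV (tenv a) f"
    using a by (auto simp: realizations_def)
  define Y where "Y = dcl M (set a \<union> M0) \<inter> {y. same_cut M M0 y (\<alpha> a)}"
  have \<phi>a: "\<phi> \<in> fmls (set a \<union> M0) (Suc n)" and pa: "p \<subseteq> fmls (set a \<union> M0) n"
    using \<phi> p by (auto simp: fmls_def)
  have "\<forall>y\<in>Y. \<exists>\<theta>\<in>fmls (set a \<union> M0) n. \<forall>b. length b = n \<longrightarrow>
      (sat M UNIV (tenv b) \<theta> \<longleftrightarrow> (\<exists>z. sat M UNIV (tenv (b @ [z])) \<phi> \<and> less_dir M d z y))"
    using definable_value_less_fm[OF _ \<phi>a] by (simp add: Y_def)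
  from bchoice[OF this[unfolded Bex_def]] obtain \<theta> where \<theta>: "\<forall>y\<in>Y. \<theta> y \<in> fmls (set a \<union> M0) n \<and>
      (\<forall>b. length b = n \<longrightarrow>
        (sat M UNIV (tenv b) (\<theta> y) \<longleftrightarrow> (\<exists>z. sat M UNIV (tenv (b @ [z])) \<phi> \<and> less_dir M d z y)))"
    by blast
  then have \<theta>_sat: "\<And>y b. y \<in> Y \<Longrightarrow> length b = n \<Longrightarrow>
      sat M UNIV (tenv b) (\<theta> y) \<longleftrightarrow> (\<exists>z. sat M UNIV (tenv (b @ [z])) \<phi> \<and> less_dir M d z y)"
    by blast
  have \<Gamma>: "p \<union> \<theta> ` Y \<subseteq> fmls (set a \<union> M0) n"
    using pa \<theta> by blast
  have small: "small (set a \<union> M0)"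
    using small_Un_finite[OF sm finite_set inf] by (simp add: Un_commute)
  have cut: "\<forall>y\<in>Y. same_cut M M0 y (\<alpha> a)" by (simp add: Y_def)
  from saturated_realizes[OF satd small inf \<Gamma>
      finitely_satisfiable_type_beyond_cut[OF pm es p \<phi> la ap graph[OF a] tM0 cut \<theta>_sat]]
  obtain a' where a': "length a' = n" "\<forall>\<psi>\<in>p \<union> \<theta> ` Y. sat M UNIV (tenv a') \<psi>"
    by blast
  then have a'P: "a' \<in> realizations M n p" by (auto simp: realizations_def)
  have "less_dir M d (\<alpha> a') y" if y: "y \<in> Y" for y
  proof -
    obtain z where "sat M UNIV (tenv (a' @ [z])) \<phi>" "less_dir M d z y"
      using a' \<theta>_sat[OF y a'(1)] y by auto
    moreover have "z = \<alpha> a'" using uniq[OF a'(1)] graph[OF a'P] calculation(1) by blast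
    ultimately show ?thesis by simp
  qed
  then show ?thesis using a'P unfolding Y_def by blast
qed

lemma non_algebraic_infinite:
  fixes M :: "'a pres_struct"
  assumes "non_algebraic M 1 (tp M A [t])"
  shows "infinite (UNIV :: 'a set)"
proof
  assume fin: "finite (UNIV :: 'a set)"
  have "Eq (Var 0) (Var 0) \<in> tp M A [t]" by (auto simp: tp_def fmls_def)
  then have "infinite {b. length b = 1 \<and> sat M UNIV (tenv b) (Eq (Var 0) (Var 0))}"
    using assms unfolding non_algebraic_def by blast
  moreover have "finite {b :: 'a list. length b = 1}"
    using finite_lists_length_eq[OF fin, of 1] by simp
  ultimately show False by (auto elim: rev_finite_subset)
qed

lemma non_algebraic_not_in:
  assumes "non_algebraic M 1 (tp M A [t])"
  shows "t \<notin> A"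
proof
  assume "t \<in> A"
  then have "Eq (Var 0) (Par t) \<in> tp M A [t]" by (auto simp: tp_def fmls_def tenv_nth)
  then have "infinite {b. length b = 1 \<and> sat M UNIV (tenv b) (Eq (Var 0) (Par t))}"
    using assms unfolding non_algebraic_def by blast
  moreover have "{b. length b = 1 \<and> sat M UNIV (tenv b) (Eq (Var 0) (Par t))} \<subseteq> {[t]}"
    by (auto simp: tenv_nth length_Suc_conv)
  ultimately show False using finite_subset by blast
qed

theorem lemma4p3:
  fixes M :: "'a pres_struct" and M0 :: "'a set" and n :: nat
    and p :: "'a fm set" and \<alpha> :: "'a list \<Rightarrow> 'a" and a :: "'a list"
  assumes "presburger_model M"
    and "saturated M"
    and "elem_sub M M0"
    and "small M0"
    and "complete_type M M0 n p"
    and "type_has_dim M M0 n p n"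
    and "rel_definable M M0 n (realizations M n p) \<alpha>"
    and "a \<in> realizations M n p"
    and "non_algebraic M 1 (tp M M0 [\<alpha> a])"
  shows "\<exists>a1\<in>realizations M n p. \<exists>a2\<in>realizations M n p.
           \<forall>y\<in>dcl M (set a \<union> M0) \<inter> {y. same_cut M M0 y (\<alpha> a)}.
             less M (\<alpha> a1) y \<and> less M y (\<alpha> a2)"
proof -
  have inf: "infinite (UNIV :: 'a set)" and tM0: "\<alpha> a \<notin> M0"
    using assms(9) by (rule non_algebraic_infinite, rule non_algebraic_not_in)
  have p: "p \<subseteq> fmls M0 n" using assms(5) by (simp add: complete_type_def)
  note beyond = realization_beyond_cut[OF assms(1-4) inf p assms(7,8) tM0]
  obtain a1 where "a1 \<in> realizations M n p"
      "\<forall>y\<in>dcl M (set a \<union> M0) \<inter> {y. same_cut M M0 y (\<alpha> a)}. less M (\<alpha> a1) y"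
    using beyond[of True] by (auto simp: less_dir_def)
  moreover obtain a2 where "a2 \<in> realizations M n p"
      "\<forall>y\<in>dcl M (set a \<union> M0) \<inter> {y. same_cut M M0 y (\<alpha> a)}. less M y (\<alpha> a2)"
    using beyond[of False] by (auto simp: less_dir_def)
  ultimately show ?thesis by blast
qed

end
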